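(* Let $X$ be an infinite dimensional separable Banach space and $T:X\to X$ a continuous linear operator. The following are equivalent: (1) for every $\delta>0$, $(X,T)$ is transitively sensitive with sensitive constant $\delta$; (2) there exists $\delta_0>0$ such that $(X,T)$ is transitively sensitive with sensitive constant $\delta_0$; (3) there exists $\delta_0>0$ such that $S_T(W_0,\delta_0)\cap N_T(U,V)\neq\varnothing$ for all nonempty open $U,V\subset X$ and every neighbourhood $W_0$ of $0$.
   Context: $N_T(U,V)=\{n\in\mathbb{Z}_+:U\cap T^{-n}V\neq\varnothing\}$ and $S_T(W,\delta)=\{n\in\mathbb{Z}_+:\exists x_1,x_2\in W,\ \|T^nx_1-T^nx_2\|>\delta\}$. $(X,T)$ is transitively sensitive with sensitive constant $\delta$ if $S_T(W,\delta)\cap N_T(U,V)\neq\varnothing$ for all nonempty open $U,V,W\subset X$. *)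

theory Defs
  imports "HOL-Analysis.Analysis"
begin

definition hitting_times :: "('a \<Rightarrow> 'a) \<Rightarrow> 'a set \<Rightarrow> 'a set \<Rightarrow> nat set" where
  "hitting_times T U V = {n. U \<inter> (T ^^ n) -` V \<noteq> {}}"

definition sensitive_times :: "('a::real_normed_vector \<Rightarrow> 'a) \<Rightarrow> 'a set \<Rightarrow> real \<Rightarrow> nat set" where
  "sensitive_times T W \<delta> =
     {n. \<exists>x1\<in>W. \<exists>x2\<in>W. norm ((T ^^ n) x1 - (T ^^ n) x2) > \<delta>}"

definition transitively_sensitive :: "('a::real_normed_vector \<Rightarrow> 'a) \<Rightarrow> real \<Rightarrow> bool" where
  "transitively_sensitive T \<delta> \<longleftrightarrow>
     (\<forall>U V W. open U \<longrightarrow> U \<noteq> {} \<longrightarrow> open V \<longrightarrow> V \<noteq> {} \<longrightarrow> open W \<longrightarrow> W \<noteq> {} \<longrightarrow>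
        sensitive_times T W \<delta> \<inter> hitting_times T U V \<noteq> {})"

definition separable_space :: "'a::topological_space itself \<Rightarrow> bool" where
  "separable_space _ \<longleftrightarrow> (\<exists>D::'a set. countable D \<and> closure D = UNIV)"

end

theory Submission
  imports Defs
begin

text \<open>For a linear operator the difference \<open>T\<^sup>n x\<^sub>1 - T\<^sup>n x\<^sub>2\<close> is invariant under translating
  both points and scales with a common dilation. So every open set can be moved to a
  neighbourhood of \<open>0\<close> without changing its sensitivity times, and dilating it by \<open>c\<close>
  multiplies the sensitive constant by \<open>c\<close>; hence transitive sensitivity does not depend on
  the constant, and it suffices to test it on neighbourhoods of \<open>0\<close>.\<close>

lemma linear_funpow:
  fixes T :: "'a::real_vector \<Rightarrow> 'a"
  assumes "linear T"
  shows "linear (T ^^ n)"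
proof (induction n)
  case 0
  show ?case by (simp add: linear_id[unfolded id_def])
next
  case (Suc n)
  show ?case using linear_compose[OF Suc.IH assms] by (simp only: funpow.simps)
qed

lemma sensitive_times_mono:
  "W \<subseteq> W' \<Longrightarrow> sensitive_times T W \<delta> \<subseteq> sensitive_times T W' \<delta>"
  unfolding sensitive_times_def by blast

lemma sensitive_times_affine_vimage:
  fixes T :: "'a::real_normed_vector \<Rightarrow> 'a"
  assumes "linear T" and "c > 0"
  shows "sensitive_times T ((\<lambda>y. a + c *\<^sub>R y) -` W) \<delta> = sensitive_times T W (c * \<delta>)"
proof -
  have "linear (T ^^ n)" for n
    using linear_funpow[OF assms(1)] .
  then have diff: "(T ^^ n) (a + c *\<^sub>R x1) - (T ^^ n) (a + c *\<^sub>R x2)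
      = c *\<^sub>R ((T ^^ n) x1 - (T ^^ n) x2)" for n x1 x2
    by (simp add: linear_add linear_scale algebra_simps)
  have "(\<exists>x1 \<in> (\<lambda>y. a + c *\<^sub>R y) -` W. \<exists>x2 \<in> (\<lambda>y. a + c *\<^sub>R y) -` W.
          \<delta> < norm ((T ^^ n) x1 - (T ^^ n) x2))
      \<longleftrightarrow> (\<exists>z1\<in>W. \<exists>z2\<in>W. c * \<delta> < norm ((T ^^ n) z1 - (T ^^ n) z2))" for n
  proof
    assume "\<exists>x1 \<in> (\<lambda>y. a + c *\<^sub>R y) -` W. \<exists>x2 \<in> (\<lambda>y. a + c *\<^sub>R y) -` W.
              \<delta> < norm ((T ^^ n) x1 - (T ^^ n) x2)"
    then obtain x1 x2 where "a + c *\<^sub>R x1 \<in> W" "a + c *\<^sub>R x2 \<in> W"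
      and "\<delta> < norm ((T ^^ n) x1 - (T ^^ n) x2)" by auto
    with diff[of n x1 x2] \<open>c > 0\<close> show "\<exists>z1\<in>W. \<exists>z2\<in>W. c * \<delta> < norm ((T ^^ n) z1 - (T ^^ n) z2)"
      by (metis mult_strict_left_mono norm_scaleR abs_of_pos)
  next
    assume "\<exists>z1\<in>W. \<exists>z2\<in>W. c * \<delta> < norm ((T ^^ n) z1 - (T ^^ n) z2)"
    then obtain z1 z2 where z: "z1 \<in> W" "z2 \<in> W" "c * \<delta> < norm ((T ^^ n) z1 - (T ^^ n) z2)"
      by auto
    define x1 x2 where "x1 = (z1 - a) /\<^sub>R c" and "x2 = (z2 - a) /\<^sub>R c"
    have z_eq: "a + c *\<^sub>R x1 = z1" "a + c *\<^sub>R x2 = z2"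
      using \<open>c > 0\<close> by (simp_all add: x1_def x2_def)
    have "c * \<delta> < c * norm ((T ^^ n) x1 - (T ^^ n) x2)"
      using z(3) diff[of n x1 x2] \<open>c > 0\<close> by (simp add: z_eq)
    then have "\<delta> < norm ((T ^^ n) x1 - (T ^^ n) x2)"
      using \<open>c > 0\<close> by simp
    with z z_eq show "\<exists>x1 \<in> (\<lambda>y. a + c *\<^sub>R y) -` W. \<exists>x2 \<in> (\<lambda>y. a + c *\<^sub>R y) -` W.
                        \<delta> < norm ((T ^^ n) x1 - (T ^^ n) x2)"
      by auto
  qed
  then show ?thesis
    unfolding sensitive_times_def by simp
qed

lemma open_affine_vimage:
  fixes W :: "'a::real_normed_vector set"
  assumes "open W"
  shows "open ((\<lambda>y. a + c *\<^sub>R y) -` W)"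
  using open_vimage[OF assms, of "\<lambda>y. a + c *\<^sub>R y"] by (simp add: continuous_intros)

lemma transitively_sensitive_iff_nhds_zero:
  fixes T :: "'a::real_normed_vector \<Rightarrow> 'a"
  assumes "linear T"
  shows "transitively_sensitive T \<delta> \<longleftrightarrow>
    (\<forall>U V W0. open U \<longrightarrow> U \<noteq> {} \<longrightarrow> open V \<longrightarrow> V \<noteq> {} \<longrightarrow>
       (\<exists>G. open G \<and> 0 \<in> G \<and> G \<subseteq> W0) \<longrightarrow> sensitive_times T W0 \<delta> \<inter> hitting_times T U V \<noteq> {})"
  (is "_ \<longleftrightarrow> ?at_zero")
proof
  assume ts: "transitively_sensitive T \<delta>"
  show ?at_zero
  proof (intro allI impI)
    fix U V W0 :: "'a set"
    assume U: "open U" "U \<noteq> {}" and V: "open V" "V \<noteq> {}"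
      and "\<exists>G. open G \<and> 0 \<in> G \<and> G \<subseteq> W0"
    then obtain G where "open G" "0 \<in> G" "G \<subseteq> W0"
      by blast
    then have "sensitive_times T G \<delta> \<inter> hitting_times T U V \<noteq> {}"
      using ts U V unfolding transitively_sensitive_def by (metis empty_iff)
    then show "sensitive_times T W0 \<delta> \<inter> hitting_times T U V \<noteq> {}"
      using sensitive_times_mono[OF \<open>G \<subseteq> W0\<close>, of T \<delta>] by blast
  qed
next
  assume at_zero: ?at_zero
  show "transitively_sensitive T \<delta>"
    unfolding transitively_sensitive_def
  proof (intro allI impI)
    fix U V W :: "'a set"
    assume U: "open U" "U \<noteq> {}" and V: "open V" "V \<noteq> {}" and "open W" "W \<noteq> {}"
    then obtain w where "w \<in> W" by blast
    define W0 where "W0 = (\<lambda>y. w + 1 *\<^sub>R y) -` W"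
    have "open W0"
      unfolding W0_def by (rule open_affine_vimage[OF \<open>open W\<close>])
    moreover have "0 \<in> W0"
      using \<open>w \<in> W\<close> by (simp add: W0_def)
    ultimately have "sensitive_times T W0 \<delta> \<inter> hitting_times T U V \<noteq> {}"
      using at_zero U V by blast
    moreover have "sensitive_times T W0 \<delta> = sensitive_times T W \<delta>"
      unfolding W0_def using sensitive_times_affine_vimage[OF assms zero_less_one] by (simp only: mult_1)
    ultimately show "sensitive_times T W \<delta> \<inter> hitting_times T U V \<noteq> {}"
      by simp
  qed
qed

lemma transitively_sensitive_rescale:
  fixes T :: "'a::real_normed_vector \<Rightarrow> 'a"
  assumes "linear T" and "transitively_sensitive T \<delta>" and "\<delta> > 0" and "\<delta>' > 0"
  shows "transitively_sensitive T \<delta>'"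
  unfolding transitively_sensitive_def
proof (intro allI impI)
  fix U V W :: "'a set"
  assume "open U" "U \<noteq> {}" "open V" "V \<noteq> {}" "open W" "W \<noteq> {}"
  then obtain w where "w \<in> W" by blast
  define c where "c = \<delta>' / \<delta>"
  have "c > 0" "c * \<delta> = \<delta>'"
    using assms(3,4) by (simp_all add: c_def)
  let ?W' = "(\<lambda>y. w + c *\<^sub>R y) -` W"
  have "open ?W'" "0 \<in> ?W'"
    using open_affine_vimage[OF \<open>open W\<close>] \<open>w \<in> W\<close> by auto
  then have "sensitive_times T ?W' \<delta> \<inter> hitting_times T U V \<noteq> {}"
    using assms(2) \<open>open U\<close> \<open>U \<noteq> {}\<close> \<open>open V\<close> \<open>V \<noteq> {}\<close>
    unfolding transitively_sensitive_def by (metis empty_iff)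
  then show "sensitive_times T W \<delta>' \<inter> hitting_times T U V \<noteq> {}"
    using sensitive_times_affine_vimage[OF assms(1) \<open>c > 0\<close>] \<open>c * \<delta> = \<delta>'\<close> by simp
qed

theorem proposition7p3:
  fixes T :: "'a::banach \<Rightarrow> 'a"
  assumes sep: "separable_space TYPE('a)"
    and infdim: "\<not> (\<exists>B::'a set. finite B \<and> span B = UNIV)"
    and lin: "bounded_linear T"
  shows "((\<forall>\<delta>>0. transitively_sensitive T \<delta>) \<longleftrightarrow> (\<exists>\<delta>0>0. transitively_sensitive T \<delta>0))
       \<and> ((\<exists>\<delta>0>0. transitively_sensitive T \<delta>0) \<longleftrightarrow>
          (\<exists>\<delta>0>0. \<forall>U V W0. open U \<longrightarrow> U \<noteq> {} \<longrightarrow> open V \<longrightarrow> V \<noteq> {} \<longrightarrow>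
              (\<exists>G. open G \<and> 0 \<in> G \<and> G \<subseteq> W0) \<longrightarrow> sensitive_times T W0 \<delta>0 \<inter> hitting_times T U V \<noteq> {}))"
proof
  have "linear T"
    using lin by (rule bounded_linear.linear)
  then show "(\<forall>\<delta>>0. transitively_sensitive T \<delta>) \<longleftrightarrow> (\<exists>\<delta>0>0. transitively_sensitive T \<delta>0)"
    using transitively_sensitive_rescale zero_less_one by blast
  show "(\<exists>\<delta>0>0. transitively_sensitive T \<delta>0) \<longleftrightarrow>
          (\<exists>\<delta>0>0. \<forall>U V W0. open U \<longrightarrow> U \<noteq> {} \<longrightarrow> open V \<longrightarrow> V \<noteq> {} \<longrightarrow>
              (\<exists>G. open G \<and> 0 \<in> G \<and> G \<subseteq> W0) \<longrightarrow> sensitive_times T W0 \<delta>0 \<inter> hitting_times T U V \<noteq> {})"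
    using transitively_sensitive_iff_nhds_zero[OF \<open>linear T\<close>] by simp
qed

end
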